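(* Let $\{M_p\mid p\in P\}$ be a Morse decomposition of a multivector field on a finite simplicial complex $K$, and let $\sigma_1,\dots,\sigma_n$ and $\sigma'_1,\dots,\sigma'_n$ be two admissible enumerations of $K$ which are Morse fixed, i.e. for every $p\in P$ the orders they induce on $M_p$ coincide. Let $A$ and $A'$ be the corresponding filtered boundary matrices and $A_{out}$, $A'_{out}$ the matrices produced by the reduction phase of ConMat on $A$ and $A'$. Then $A_{out}[i,j]=A'_{out}[i',j']$ whenever $\sigma_i=\sigma'_{i'}$ and $\sigma_j=\sigma'_{j'}$. Furthermore, if $j$ is a homogeneous column of $A_{out}$ with pivot row $\ell$, and $\sigma'_{j'}=\sigma_j$, $\sigma'_{\ell'}=\sigma_\ell$, then $j'$ is a homogeneous column of $A'_{out}$ with pivot row $\ell'$.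
   Context: $K$ is a finite simplicial complex ($\tau\le\sigma$: $\tau$ is a face of $\sigma$; $\mathrm{cl}(\sigma)=\{\tau:\tau\le\sigma\}$). A multivector field $\mathcal V$ on $K$ is a partition of $K$ into convex sets $V$ (if $\sigma,\tau\in V$ and $\sigma\le\mu\le\tau$ then $\mu\in V$); $[\sigma]_{\mathcal V}$ is the part containing $\sigma$, $F_{\mathcal V}(\sigma)=[\sigma]_{\mathcal V}\cup\mathrm{cl}(\sigma)$, and a path is a sequence $\sigma_1,\dots,\sigma_r$ with $\sigma_k\in F_{\mathcal V}(\sigma_{k-1})$. A Morse decomposition indexed by a finite poset $(P,\le_P)$ is a partition $K=\bigsqcup_{p\in P}M_p$ such that every path from $M_p$ to $M_q$ has $q\le_P p$; $[\sigma]_P$ is the $p$ with $\sigma\in M_p$. An admissible enumeration is $\sigma_1,\dots,\sigma_n$ of all simplices of $K$ such that (a) for some linear extension $\le_{lin}$ of $\le_P$, $i\le j\Rightarrow[\sigma_i]_P\le_{lin}[\sigma_j]_P$; (b) if $\sigma_i$ is a proper face of $\sigma_j$ then $i<j$. Different admissible enumerations may use different linear extensions. The filtered boundary matrix is the $n\times n$ $\mathbb Z_2$-matrix with entry $(i,j)$ equal to $1$ iff $\sigma_i$ is a codimension-one face of $\sigma_j$; row/column $i$ represents $\sigma_i$. For a nonzero column $j$ of a matrix $B$, its pivot row $\mathrm{low}_B(j)$ is the largest $i$ with $B[i,j]=1$; column $j$ is homogeneous if nonzero and $\sigma_j$, $\sigma_{\mathrm{low}_B(j)}$ are in the same Morse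 set. ConMat reduction phase on $A$ (in place): for $j=1,\dots,n$: for $i=\mathrm{low}_A(j)$ down to $1$: if $A[i,j]=1$ and some column $s<j$ of the current matrix is homogeneous with $\mathrm{low}_A(s)=i$, add column $s$ to column $j$ (mod 2). The result is $A_{out}$. *)

theory Defs
  imports Main
begin

definition simplicial_complex :: "'v set set \<Rightarrow> bool" where
  "simplicial_complex K \<longleftrightarrow> finite K \<and>
     (\<forall>\<sigma>\<in>K. finite \<sigma> \<and> \<sigma> \<noteq> {} \<and> (\<forall>\<tau>. \<tau> \<subseteq> \<sigma> \<and> \<tau> \<noteq> {} \<longrightarrow> \<tau> \<in> K))"

definition convex_in :: "'v set set \<Rightarrow> bool" where
  "convex_in X \<longleftrightarrow> (\<forall>\<sigma>\<in>X. \<forall>\<tau>\<in>X. \<forall>\<mu>. \<sigma> \<subseteq> \<mu> \<and> \<mu> \<subseteq> \<tau> \<longrightarrow> \<mu> \<in> X)"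

definition multivector_field :: "'v set set \<Rightarrow> 'v set set set \<Rightarrow> bool" where
  "multivector_field K V \<longleftrightarrow>
     (\<forall>X\<in>V. X \<noteq> {} \<and> convex_in X) \<and> \<Union>V = K \<and>
     (\<forall>X\<in>V. \<forall>Y\<in>V. X \<noteq> Y \<longrightarrow> X \<inter> Y = {})"

definition in_F :: "'v set set \<Rightarrow> 'v set set set \<Rightarrow> 'v set \<Rightarrow> 'v set \<Rightarrow> bool" where
  "in_F K V \<sigma> \<tau> \<longleftrightarrow> (\<exists>X\<in>V. \<sigma> \<in> X \<and> \<tau> \<in> X) \<or> (\<tau> \<in> K \<and> \<tau> \<subseteq> \<sigma>)"

definition is_path :: "'v set set \<Rightarrow> 'v set set set \<Rightarrow> 'v set list \<Rightarrow> bool" where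
  "is_path K V ps \<longleftrightarrow> ps \<noteq> [] \<and> set ps \<subseteq> K \<and>
     (\<forall>k. Suc k < length ps \<longrightarrow> in_F K V (ps ! k) (ps ! Suc k))"

definition partial_order_pred :: "'p set \<Rightarrow> ('p \<Rightarrow> 'p \<Rightarrow> bool) \<Rightarrow> bool" where
  "partial_order_pred P le \<longleftrightarrow>
     (\<forall>p\<in>P. le p p) \<and> (\<forall>p\<in>P. \<forall>q\<in>P. le p q \<and> le q p \<longrightarrow> p = q) \<and>
     (\<forall>p\<in>P. \<forall>q\<in>P. \<forall>r\<in>P. le p q \<and> le q r \<longrightarrow> le p r)"

definition linear_extension :: "'p set \<Rightarrow> ('p \<Rightarrow> 'p \<Rightarrow> bool) \<Rightarrow> ('p \<Rightarrow> 'p \<Rightarrow> bool) \<Rightarrow> bool" where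
  "linear_extension P le lin \<longleftrightarrow> partial_order_pred P lin \<and>
     (\<forall>p\<in>P. \<forall>q\<in>P. lin p q \<or> lin q p) \<and> (\<forall>p\<in>P. \<forall>q\<in>P. le p q \<longrightarrow> lin p q)"

definition morse_decomposition ::
  "'v set set \<Rightarrow> 'v set set set \<Rightarrow> 'p set \<Rightarrow> ('p \<Rightarrow> 'p \<Rightarrow> bool) \<Rightarrow> ('p \<Rightarrow> 'v set set) \<Rightarrow> bool" where
  "morse_decomposition K V P le M \<longleftrightarrow>
     finite P \<and> partial_order_pred P le \<and>
     (\<Union>p\<in>P. M p) = K \<and> (\<forall>p\<in>P. \<forall>q\<in>P. p \<noteq> q \<longrightarrow> M p \<inter> M q = {}) \<and>
     (\<forall>p\<in>P. \<forall>q\<in>P. \<forall>ps. is_path K V ps \<and> hd ps \<in> M p \<and> last ps \<in> M q \<longrightarrow> le q p)"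

text \<open>Enumerations are lists, indices are 0-based.\<close>
definition admissible_enum ::
  "'v set set \<Rightarrow> 'p set \<Rightarrow> ('p \<Rightarrow> 'p \<Rightarrow> bool) \<Rightarrow> ('p \<Rightarrow> 'v set set) \<Rightarrow> 'v set list \<Rightarrow> bool" where
  "admissible_enum K P le M es \<longleftrightarrow> distinct es \<and> set es = K \<and>
     (\<exists>lin. linear_extension P le lin \<and>
        (\<forall>i<length es. \<forall>j<length es. \<forall>p\<in>P. \<forall>q\<in>P.
           i \<le> j \<and> es ! i \<in> M p \<and> es ! j \<in> M q \<longrightarrow> lin p q)) \<and>
     (\<forall>i<length es. \<forall>j<length es. es ! i \<subset> es ! j \<longrightarrow> i < j)"

definition morse_fixed ::
  "'p set \<Rightarrow> ('p \<Rightarrow> 'v set set) \<Rightarrow> 'v set list \<Rightarrow> 'v set list \<Rightarrow> bool" where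
  "morse_fixed P M es es' \<longleftrightarrow>
     (\<forall>p\<in>P. \<forall>i<length es. \<forall>j<length es. \<forall>i'<length es'. \<forall>j'<length es'.
        es ! i \<in> M p \<and> es ! j \<in> M p \<and> es' ! i' = es ! i \<and> es' ! j' = es ! j
        \<longrightarrow> (i < j \<longleftrightarrow> i' < j'))"

text \<open>Z_2 matrices as boolean functions on 0-based indices.\<close>
type_synonym mat2 = "nat \<Rightarrow> nat \<Rightarrow> bool"

definition boundary_matrix :: "'v set list \<Rightarrow> mat2" where
  "boundary_matrix es = (\<lambda>i j. i < length es \<and> j < length es \<and>
      es ! i \<subseteq> es ! j \<and> card (es ! i) + 1 = card (es ! j))"

definition nonzero_col :: "nat \<Rightarrow> mat2 \<Rightarrow> nat \<Rightarrow> bool" where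
  "nonzero_col n A j \<longleftrightarrow> (\<exists>i<n. A i j)"

definition low :: "nat \<Rightarrow> mat2 \<Rightarrow> nat \<Rightarrow> nat" where
  "low n A j = Max {i. i < n \<and> A i j}"

definition homogeneous ::
  "'p set \<Rightarrow> ('p \<Rightarrow> 'v set set) \<Rightarrow> 'v set list \<Rightarrow> mat2 \<Rightarrow> nat \<Rightarrow> bool" where
  "homogeneous P M es A j \<longleftrightarrow> nonzero_col (length es) A j \<and>
     (\<exists>p\<in>P. es ! j \<in> M p \<and> es ! (low (length es) A j) \<in> M p)"

definition add_col :: "mat2 \<Rightarrow> nat \<Rightarrow> nat \<Rightarrow> mat2" where
  "add_col A s j = (\<lambda>r c. if c = j then A r j \<noteq> A r s else A r c)"

text \<open>Inner loop: \<open>red_rows \<dots> j A (Suc i)\<close> processes rows i, i-1, ..., 0 of column j.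
  If several candidate columns s exist, the least one is taken (in fact at most one exists).\<close>
fun red_rows ::
  "'p set \<Rightarrow> ('p \<Rightarrow> 'v set set) \<Rightarrow> 'v set list \<Rightarrow> nat \<Rightarrow> mat2 \<Rightarrow> nat \<Rightarrow> mat2" where
  "red_rows P M es j A 0 = A"
| "red_rows P M es j A (Suc i) =
     red_rows P M es j
       (if A i j \<and> (\<exists>s<j. homogeneous P M es A s \<and> low (length es) A s = i)
        then add_col A (LEAST s. s < j \<and> homogeneous P M es A s \<and> low (length es) A s = i) j
        else A) i"

definition red_col ::
  "'p set \<Rightarrow> ('p \<Rightarrow> 'v set set) \<Rightarrow> 'v set list \<Rightarrow> mat2 \<Rightarrow> nat \<Rightarrow> mat2" where
  "red_col P M es A j =
     (if nonzero_col (length es) A j then red_rows P M es j A (Suc (low (length es) A j)) else A)"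

fun red_cols ::
  "'p set \<Rightarrow> ('p \<Rightarrow> 'v set set) \<Rightarrow> 'v set list \<Rightarrow> mat2 \<Rightarrow> nat \<Rightarrow> mat2" where
  "red_cols P M es A 0 = A"
| "red_cols P M es A (Suc j) = red_col P M es (red_cols P M es A j) j"

definition conmat_reduce ::
  "'p set \<Rightarrow> ('p \<Rightarrow> 'v set set) \<Rightarrow> 'v set list \<Rightarrow> mat2" where
  "conmat_reduce P M es = red_cols P M es (boundary_matrix es) (length es)"

end

theory Submission
  imports Defs
begin

(*
  ConMat only ever adds a homogeneous column to a later column lying Morse-above it. Hence every
  reduced column is its boundary column plus a Z_2-sum of earlier homogeneous columns, all its
  entries lie Morse-below it, and none of them sits at the pivot of an earlier homogeneous column.
  Such a reduced representative is unique: the difference of two of them is a sum of homogeneous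
  columns with pairwise distinct pivots, and the largest of these pivots survives in the sum.
  Two admissible enumerations order distinct Morse sets compatibly with the Morse order, and a
  Morse fixed pair agrees inside each Morse set; so the reindexing between them preserves the
  relevant column order and carries homogeneous columns with their pivots to homogeneous columns
  with the corresponding pivots. Strong induction on the column then shows that the two reduced
  matrices agree up to reindexing.
*)

section \<open>Column sums over Z_2 and pivots\<close>

definition colsum :: "mat2 \<Rightarrow> nat set \<Rightarrow> nat \<Rightarrow> bool" where
  "colsum A S r \<longleftrightarrow> odd (card {s\<in>S. A r s})"

lemma colsum_empty [simp]: "\<not> colsum A {} r"
  by (simp add: colsum_def)

lemma colsum_singleton [simp]: "colsum A {s} r = A r s"
proof -
  have "{x\<in>{s}. A r x} = (if A r s then {s} else {})"
    by auto
  then show ?thesis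
    by (simp add: colsum_def)
qed

lemma colsum_cong: "(\<And>s. s \<in> S \<Longrightarrow> A' r s = A r s) \<Longrightarrow> colsum A' S r = colsum A S r"
  unfolding colsum_def by (metis (mono_tags, lifting) Collect_cong)

lemma colsum_symdiff:
  assumes "finite S" "finite T"
  shows "colsum A (sym_diff S T) r = (colsum A S r \<noteq> colsum A T r)"
proof -
  define X where "X = {s\<in>S. A r s}"
  define Y where "Y = {s\<in>T. A r s}"
  have fin: "finite X" "finite Y" using assms by (simp_all add: X_def Y_def)
  have "{s\<in>sym_diff S T. A r s} = sym_diff X Y"
    by (auto simp: X_def Y_def)
  moreover have "card (sym_diff X Y) + 2 * card (X \<inter> Y) = card X + card Y"
  proof -
    have "card (sym_diff X Y) = card (X - Y) + card (Y - X)"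
      using fin by (intro card_Un_disjoint) auto
    moreover have "card X = card (X - Y) + card (X \<inter> Y)" "card Y = card (Y - X) + card (X \<inter> Y)"
      using fin by (metis Int_commute card_Int_Diff add.commute)+
    ultimately show ?thesis by simp
  qed
  ultimately show ?thesis
    unfolding colsum_def X_def[symmetric] Y_def[symmetric] by presburger
qed

lemma colsum_image:
  assumes "inj_on f S" "\<And>s. s \<in> S \<Longrightarrow> A' r' (f s) = A r s"
  shows "colsum A' (f ` S) r' = colsum A S r"
proof -
  have "{s'\<in>f ` S. A' r' s'} = f ` {s\<in>S. A r s}"
    using assms(2) by auto
  moreover have "inj_on f {s\<in>S. A r s}"
    using assms(1) by (rule inj_on_subset) auto
  ultimately show ?thesis
    unfolding colsum_def by (simp add: card_image)
qed

lemma low_less: "nonzero_col n A c \<Longrightarrow> low n A c < n"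
  unfolding nonzero_col_def low_def using Max_in[of "{i. i < n \<and> A i c}"] by auto

lemma low_entry: "nonzero_col n A c \<Longrightarrow> A (low n A c) c"
  unfolding nonzero_col_def low_def using Max_in[of "{i. i < n \<and> A i c}"] by auto

lemma le_low: "r < n \<Longrightarrow> A r c \<Longrightarrow> r \<le> low n A c"
  unfolding low_def by (rule Max_ge) auto

lemma low_eqI: "l < n \<Longrightarrow> A l c \<Longrightarrow> (\<And>r. r < n \<Longrightarrow> A r c \<Longrightarrow> r \<le> l) \<Longrightarrow> low n A c = l"
  unfolding low_def by (rule Max_eqI) auto

lemma low_cong: "(\<And>r. A' r c = A r c) \<Longrightarrow> low n A' c = low n A c"
  by (simp add: low_def)

lemma homogeneous_cong:
  "(\<And>r. A' r c = A r c) \<Longrightarrow> homogeneous P M es A' c = homogeneous P M es A c"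
  by (simp add: homogeneous_def nonzero_col_def low_def)

text \<open>Among columns with pairwise distinct pivots, only the one with the largest pivot has an
  entry in that row.\<close>
lemma colsum_at_max_pivot:
  assumes "finite T" "T \<noteq> {}" "\<And>t. t \<in> T \<Longrightarrow> nonzero_col n A t" "inj_on (low n A) T"
  obtains t where "t \<in> T" "colsum A T (low n A t)"
proof -
  have "Max (low n A ` T) \<in> low n A ` T"
    using assms(1,2) by (intro Max_in) auto
  then obtain t where t: "t \<in> T" "low n A t = Max (low n A ` T)"
    by (auto simp del: Max_in)
  have max: "low n A s \<le> low n A t" if "s \<in> T" for s
    using Max_ge[of "low n A ` T" "low n A s"] assms(1) that t(2) by simp
  have "{s\<in>T. A (low n A t) s} = {t}"
  proof (intro equalityI subsetI)
    fix s assume s: "s \<in> {s\<in>T. A (low n A t) s}"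
    then have "low n A t \<le> low n A s"
      using le_low low_less assms(3) t by blast
    then have "low n A s = low n A t"
      using max s by (simp add: antisym)
    then show "s \<in> {t}"
      using assms(4) s t(1) by (auto dest: inj_onD)
  qed (use t(1) low_entry assms(3) in auto)
  then show ?thesis
    using that t(1) by (simp add: colsum_def)
qed

lemma add_col_apply: "add_col A s j r c = (if c = j then A r j \<noteq> A r s else A r c)"
  by (simp add: add_col_def)

lemma red_rows_other_col: "c \<noteq> j \<Longrightarrow> red_rows P M es j A i r c = A r c"
  by (induction i arbitrary: A) (simp_all add: add_col_def)

lemma red_col_other_col: "c \<noteq> j \<Longrightarrow> red_col P M es A j r c = A r c"
  by (simp add: red_col_def red_rows_other_col del: red_rows.simps)

section \<open>The Morse order\<close>

locale morse_decomposed =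
  fixes K :: "'v set set" and V :: "'v set set set"
    and P :: "'p set" and le :: "'p \<Rightarrow> 'p \<Rightarrow> bool" and M :: "'p \<Rightarrow> 'v set set"
  assumes morse_decomposition: "morse_decomposition K V P le M"
begin

definition morse_le :: "'v set \<Rightarrow> 'v set \<Rightarrow> bool" where
  "morse_le \<sigma> \<tau> \<longleftrightarrow> (\<exists>p\<in>P. \<exists>q\<in>P. \<sigma> \<in> M p \<and> \<tau> \<in> M q \<and> le p q)"

definition same_morse_set :: "'v set \<Rightarrow> 'v set \<Rightarrow> bool" where
  "same_morse_set \<sigma> \<tau> \<longleftrightarrow> (\<exists>p\<in>P. \<sigma> \<in> M p \<and> \<tau> \<in> M p)"

lemma morse_order: "partial_order_pred P le"
  using morse_decomposition by (simp add: morse_decomposition_def)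

lemma morse_order_refl: "p \<in> P \<Longrightarrow> le p p"
  using morse_order unfolding partial_order_pred_def by blast

lemma morse_order_trans: "p \<in> P \<Longrightarrow> q \<in> P \<Longrightarrow> r \<in> P \<Longrightarrow> le p q \<Longrightarrow> le q r \<Longrightarrow> le p r"
  using morse_order unfolding partial_order_pred_def by blast

lemma morse_set_exists:
  assumes "\<sigma> \<in> K"
  shows "\<exists>p\<in>P. \<sigma> \<in> M p"
proof -
  have "(\<Union>p\<in>P. M p) = K"
    using morse_decomposition by (simp add: morse_decomposition_def)
  then show ?thesis
    using assms by blast
qed

lemma morse_set_unique:
  assumes "p \<in> P" "q \<in> P" "\<sigma> \<in> M p" "\<sigma> \<in> M q"
  shows "p = q"
proof -
  have "\<forall>p\<in>P. \<forall>q\<in>P. p \<noteq> q \<longrightarrow> M p \<inter> M q = {}"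
    using morse_decomposition by (simp add: morse_decomposition_def)
  then show ?thesis
    using assms by blast
qed

lemma path_descends:
  assumes "is_path K V ps" "p \<in> P" "q \<in> P" "hd ps \<in> M p" "last ps \<in> M q"
  shows "le q p"
proof -
  have "\<forall>p\<in>P. \<forall>q\<in>P. \<forall>ps. is_path K V ps \<and> hd ps \<in> M p \<and> last ps \<in> M q \<longrightarrow> le q p"
    using morse_decomposition unfolding morse_decomposition_def by (elim conjE) assumption
  then show ?thesis
    using assms by blast
qed

lemma morse_le_trans:
  assumes "morse_le \<sigma> \<tau>" "morse_le \<tau> \<upsilon>"
  shows "morse_le \<sigma> \<upsilon>"
proof -
  obtain p q where pq: "p \<in> P" "q \<in> P" "\<sigma> \<in> M p" "\<tau> \<in> M q" "le p q"
    using assms(1) unfolding morse_le_def by blast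
  obtain q' r where qr: "q' \<in> P" "r \<in> P" "\<tau> \<in> M q'" "\<upsilon> \<in> M r" "le q' r"
    using assms(2) unfolding morse_le_def by blast
  have "q' = q"
    using morse_set_unique pq(2,4) qr(1,3) by blast
  then have "le p r"
    using morse_order_trans[OF pq(1,2) qr(2) pq(5)] qr(5) by simp
  then show ?thesis
    using pq(1,3) qr(2,4) unfolding morse_le_def by blast
qed

lemma same_morse_set_sym: "same_morse_set \<sigma> \<tau> \<Longrightarrow> same_morse_set \<tau> \<sigma>"
  unfolding same_morse_set_def by blast

lemma same_morse_set_trans: "same_morse_set \<sigma> \<tau> \<Longrightarrow> same_morse_set \<tau> \<upsilon> \<Longrightarrow> same_morse_set \<sigma> \<upsilon>"
  unfolding same_morse_set_def by (metis morse_set_unique)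

lemma same_morse_set_imp_morse_le: "same_morse_set \<sigma> \<tau> \<Longrightarrow> morse_le \<sigma> \<tau>"
  unfolding same_morse_set_def morse_le_def using morse_order_refl by blast

lemma face_morse_le:
  assumes "\<sigma> \<in> K" "\<tau> \<in> K" "\<sigma> \<subseteq> \<tau>"
  shows "morse_le \<sigma> \<tau>"
proof -
  have path: "is_path K V [\<tau>, \<sigma>]"
    using assms by (auto simp: is_path_def in_F_def less_Suc_eq)
  obtain p q where pq: "p \<in> P" "\<tau> \<in> M p" "q \<in> P" "\<sigma> \<in> M q"
    using morse_set_exists assms(1,2) by blast
  then have "le q p"
    using path_descends[OF path] by simp
  then show ?thesis
    using pq unfolding morse_le_def by blast
qed

end

locale admissible_enumeration = morse_decomposed K V P le M
  for K :: "'v set set" and V P le M +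
  fixes es :: "'v set list"
  assumes admissible: "admissible_enum K P le M es"
begin

lemma distinct_enum: "distinct es"
  and set_enum: "set es = K"
  using admissible by (simp_all add: admissible_enum_def)

lemma index_less_if_morse_le:
  assumes ab: "a < length es" "b < length es"
    and below: "morse_le (es ! a) (es ! b)" and not_same: "\<not> same_morse_set (es ! a) (es ! b)"
  shows "a < b"
proof (rule ccontr)
  assume "\<not> a < b"
  obtain lin where lin: "linear_extension P le lin"
    and mono: "\<forall>i<length es. \<forall>j<length es. \<forall>p\<in>P. \<forall>q\<in>P.
                 i \<le> j \<and> es ! i \<in> M p \<and> es ! j \<in> M q \<longrightarrow> lin p q"
    using admissible unfolding admissible_enum_def by blast
  obtain p q where pq: "p \<in> P" "q \<in> P" "es ! a \<in> M p" "es ! b \<in> M q" "le p q"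
    using below unfolding morse_le_def by blast
  have "lin q p"
    using mono ab pq \<open>\<not> a < b\<close> by (meson not_le_imp_less less_imp_le)
  moreover have "lin p q"
    using lin pq unfolding linear_extension_def by blast
  ultimately have "p = q"
    using lin pq unfolding linear_extension_def partial_order_pred_def by blast
  then show False
    using not_same pq unfolding same_morse_set_def by blast
qed

lemma homogeneous_iff_same_morse_set:
  "homogeneous P M es A c \<longleftrightarrow>
     nonzero_col (length es) A c \<and> same_morse_set (es ! c) (es ! low (length es) A c)"
  by (simp add: homogeneous_def same_morse_set_def)

subsection \<open>Invariants of the ConMat reduction\<close>

definition hom_pivot_before :: "mat2 \<Rightarrow> nat \<Rightarrow> nat \<Rightarrow> bool" where
  "hom_pivot_before A c r \<longleftrightarrow> (\<exists>s<c. homogeneous P M es A s \<and> low (length es) A s = r)"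

definition supported :: "mat2 \<Rightarrow> nat \<Rightarrow> bool" where
  "supported A c \<longleftrightarrow> (\<forall>r<length es. A r c \<longrightarrow> morse_le (es ! r) (es ! c))"

definition reduced_col :: "mat2 \<Rightarrow> nat \<Rightarrow> bool" where
  "reduced_col A c \<longleftrightarrow> (\<forall>r<length es. A r c \<longrightarrow> \<not> hom_pivot_before A c r)"

definition boundary_reduct :: "mat2 \<Rightarrow> nat \<Rightarrow> bool" where
  "boundary_reduct A c \<longleftrightarrow>
     (\<exists>S \<subseteq> {s. s < c \<and> homogeneous P M es A s \<and> morse_le (es ! s) (es ! c)}.
        \<forall>r<length es. A r c = (boundary_matrix es r c \<noteq> colsum A S r))"

text \<open>Loop invariants of \<open>red_rows\<close> once the rows from \<open>i\<close> on of column \<open>j\<close> are processed,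
  and of \<open>red_cols\<close> once the columns below \<open>k\<close> are processed.\<close>
definition reduced_from :: "mat2 \<Rightarrow> nat \<Rightarrow> nat \<Rightarrow> bool" where
  "reduced_from A j i \<longleftrightarrow> boundary_reduct A j \<and> supported A j \<and>
     (\<forall>r. i \<le> r \<longrightarrow> r < length es \<longrightarrow> A r j \<longrightarrow> \<not> hom_pivot_before A j r)"

definition reduced_before :: "mat2 \<Rightarrow> nat \<Rightarrow> bool" where
  "reduced_before A k \<longleftrightarrow> (\<forall>c r. k \<le> c \<longrightarrow> A r c = boundary_matrix es r c) \<and>
     (\<forall>c<length es. supported A c) \<and> (\<forall>c<k. boundary_reduct A c \<and> reduced_col A c)"

lemma hom_pivot_before_cong:
  "(\<And>s r. s < c \<Longrightarrow> A' r s = A r s) \<Longrightarrow> hom_pivot_before A' c r = hom_pivot_before A c r"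
  unfolding hom_pivot_before_def by (metis homogeneous_cong low_cong)

lemma supported_cong: "(\<And>r. A' r c = A r c) \<Longrightarrow> supported A' c = supported A c"
  by (simp add: supported_def)

lemma reduced_col_cong:
  "(\<And>s r. s \<le> c \<Longrightarrow> A' r s = A r s) \<Longrightarrow> reduced_col A' c = reduced_col A c"
  unfolding reduced_col_def using hom_pivot_before_cong[of c A' A] by simp

lemma boundary_reduct_cong:
  assumes same_cols: "\<And>s r. s \<le> c \<Longrightarrow> A' r s = A r s"
  shows "boundary_reduct A' c = boundary_reduct A c"
proof -
  define X where "X = {s. s < c \<and> homogeneous P M es A s \<and> morse_le (es ! s) (es ! c)}"
  have "homogeneous P M es A' s = homogeneous P M es A s" if "s < c" for s
    using same_cols that by (intro homogeneous_cong) simp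
  then have X': "{s. s < c \<and> homogeneous P M es A' s \<and> morse_le (es ! s) (es ! c)} = X"
    unfolding X_def by blast
  have "(\<forall>r<length es. A' r c = (boundary_matrix es r c \<noteq> colsum A' S r)) \<longleftrightarrow>
        (\<forall>r<length es. A r c = (boundary_matrix es r c \<noteq> colsum A S r))" if "S \<subseteq> X" for S
  proof -
    have "colsum A' S r = colsum A S r" for r
      using that same_cols unfolding X_def by (intro colsum_cong) auto
    then show ?thesis
      using same_cols by simp
  qed
  then show ?thesis
    unfolding boundary_reduct_def X' X_def[symmetric] by (simp cong: conj_cong)
qed

lemma boundary_reduct_add_col:
  assumes red: "boundary_reduct A j" and s0: "s0 < j" "homogeneous P M es A s0"
    and s0_below: "morse_le (es ! s0) (es ! j)"
  shows "boundary_reduct (add_col A s0 j) j"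
proof -
  let ?A' = "add_col A s0 j"
  have left: "?A' r s = A r s" if "s < j" for s r
    using that by (simp add: add_col_apply)
  have hom_left: "homogeneous P M es ?A' s = homogeneous P M es A s" if "s < j" for s
    using that left by (intro homogeneous_cong) simp
  obtain S where S: "S \<subseteq> {s. s < j \<and> homogeneous P M es A s \<and> morse_le (es ! s) (es ! j)}"
    and sum: "\<forall>r<length es. A r j = (boundary_matrix es r j \<noteq> colsum A S r)"
    using red unfolding boundary_reduct_def by blast
  show ?thesis
    unfolding boundary_reduct_def
  proof (intro exI conjI allI impI)
    have "finite S"
      using S by (rule finite_subset) simp
    then have "colsum A (sym_diff S {s0}) r = (colsum A S r \<noteq> A r s0)" for r
      by (simp add: colsum_symdiff)
    moreover have "colsum ?A' (sym_diff S {s0}) r = colsum A (sym_diff S {s0}) r" for r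
      using S s0(1) left by (intro colsum_cong) auto
    ultimately show "?A' r j = (boundary_matrix es r j \<noteq> colsum ?A' (sym_diff S {s0}) r)"
      if "r < length es" for r
      using that sum by (auto simp: add_col_apply)
    show "sym_diff S {s0} \<subseteq> {s. s < j \<and> homogeneous P M es ?A' s \<and> morse_le (es ! s) (es ! j)}"
      using S s0 s0_below hom_left by auto
  qed
qed

lemma supported_add_col:
  assumes "supported A j" "supported A s0" "morse_le (es ! s0) (es ! j)"
  shows "supported (add_col A s0 j) j"
  unfolding supported_def
proof (intro allI impI)
  fix r assume r: "r < length es" "add_col A s0 j r j"
  then consider "A r j" | "A r s0"
    by (auto simp: add_col_apply)
  then show "morse_le (es ! r) (es ! j)"
  proof cases
    case 1
    then show ?thesis
      using assms(1) r(1) unfolding supported_def by blast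
  next
    case 2
    then have "morse_le (es ! r) (es ! s0)"
      using assms(2) r(1) unfolding supported_def by blast
    then show ?thesis
      using assms(3) morse_le_trans by blast
  qed
qed

lemma reduced_from_add_col:
  assumes j: "j < length es" and supp_left: "\<And>s. s < j \<Longrightarrow> supported A s"
    and red: "reduced_from A j (Suc i)"
    and s0: "s0 < j" "homogeneous P M es A s0" "low (length es) A s0 = i" and entry: "A i j"
  shows "reduced_from (add_col A s0 j) j i"
proof -
  let ?A' = "add_col A s0 j"
  have col: "?A' r j = (A r j \<noteq> A r s0)" for r
    by (simp add: add_col_apply)
  have pivots: "hom_pivot_before ?A' j r = hom_pivot_before A j r" for r
    by (rule hom_pivot_before_cong) (simp add: add_col_apply)
  have nz: "nonzero_col (length es) A s0"
    using s0(2) unfolding homogeneous_def by blast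
  have i: "i < length es" "A i s0" and below_i: "\<And>r. r < length es \<Longrightarrow> A r s0 \<Longrightarrow> r \<le> i"
    using low_less[OF nz] low_entry[OF nz] le_low[of _ "length es" A s0] s0(3) by auto
  have "morse_le (es ! i) (es ! j)"
    using red i(1) entry unfolding reduced_from_def supported_def by blast
  moreover have "same_morse_set (es ! s0) (es ! i)"
    using s0(2,3) unfolding homogeneous_iff_same_morse_set by blast
  ultimately have s0_below: "morse_le (es ! s0) (es ! j)"
    using same_morse_set_imp_morse_le morse_le_trans by blast
  have "\<not> hom_pivot_before ?A' j r" if "i \<le> r" "r < length es" "?A' r j" for r
  proof (cases "r = i")
    case True
    then show ?thesis
      using that(3) col entry i(2) by simp
  next
    case False
    then have "A r j" "Suc i \<le> r"
      using that col below_i by force+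
    then show ?thesis
      using red that(2) pivots unfolding reduced_from_def by blast
  qed
  moreover have "boundary_reduct ?A' j" "supported ?A' j"
    using red boundary_reduct_add_col[OF _ s0(1,2) s0_below]
      supported_add_col[OF _ supp_left[OF s0(1)] s0_below]
    unfolding reduced_from_def by blast+
  ultimately show ?thesis
    unfolding reduced_from_def by blast
qed

lemma reduced_from_red_rows:
  assumes j: "j < length es"
  shows "(\<And>s. s < j \<Longrightarrow> supported A s) \<Longrightarrow> reduced_from A j i \<Longrightarrow>
    reduced_from (red_rows P M es j A i) j 0"
proof (induction i arbitrary: A)
  case 0
  then show ?case by simp
next
  case (Suc i)
  let ?s0 = "LEAST s. s < j \<and> homogeneous P M es A s \<and> low (length es) A s = i"
  define A' where "A' = (if A i j \<and> hom_pivot_before A j i then add_col A ?s0 j else A)"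
  have step: "red_rows P M es j A (Suc i) = red_rows P M es j A' i"
    by (simp add: A'_def hom_pivot_before_def)
  have "reduced_from A' j i"
  proof (cases "A i j \<and> hom_pivot_before A j i")
    case True
    then have "?s0 < j \<and> homogeneous P M es A ?s0 \<and> low (length es) A ?s0 = i"
      unfolding hom_pivot_before_def by (metis (mono_tags, lifting) LeastI_ex)
    then show ?thesis
      using True reduced_from_add_col[OF j Suc.prems] unfolding A'_def by simp
  next
    case False
    have "\<not> hom_pivot_before A j r" if "i \<le> r" "r < length es" "A r j" for r
      using False Suc.prems(2) that unfolding reduced_from_def by (cases "r = i") auto
    then show ?thesis
      using False Suc.prems(2) unfolding A'_def reduced_from_def by auto
  qed
  moreover have "supported A' s" if "s < j" for s
    using Suc.prems(1)[OF that] that supported_cong[of A' s A]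
    unfolding A'_def by (simp add: add_col_apply)
  ultimately show ?case
    using Suc.IH step by simp
qed

lemma reduced_from_start:
  assumes "reduced_before A k" "k < length es" "\<And>r. i \<le> r \<Longrightarrow> r < length es \<Longrightarrow> \<not> A r k"
  shows "reduced_from A k i"
proof -
  have "boundary_reduct A k"
    using assms(1) unfolding reduced_before_def boundary_reduct_def by (intro exI[of _ "{}"]) simp
  then show ?thesis
    using assms unfolding reduced_from_def reduced_before_def by blast
qed

lemma reduced_from_red_col:
  assumes red: "reduced_before A k" and k: "k < length es"
  shows "reduced_from (red_col P M es A k) k 0"
proof (cases "nonzero_col (length es) A k")
  case True
  have "\<not> A r k" if "Suc (low (length es) A k) \<le> r" "r < length es" for r
    using that le_low[of r "length es" A k] by auto
  then have "reduced_from A k (Suc (low (length es) A k))"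
    using red k by (intro reduced_from_start) auto
  moreover have "supported A s" if "s < k" for s
    using red that k unfolding reduced_before_def by simp
  ultimately show ?thesis
    using True reduced_from_red_rows[OF k] by (simp add: red_col_def del: red_rows.simps)
next
  case False
  then show ?thesis
    using red k unfolding red_col_def nonzero_col_def by (auto intro: reduced_from_start)
qed

lemma reduced_before_red_col:
  assumes red: "reduced_before A k" and k: "k < length es"
  shows "reduced_before (red_col P M es A k) (Suc k)"
proof -
  let ?A' = "red_col P M es A k"
  have other: "?A' r c = A r c" if "c \<noteq> k" for c r
    using that by (rule red_col_other_col)
  have new: "boundary_reduct ?A' k" "supported ?A' k" "reduced_col ?A' k"
    using reduced_from_red_col[OF red k] unfolding reduced_from_def reduced_col_def by auto
  have "boundary_reduct ?A' c \<and> reduced_col ?A' c" if "c < k" for c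
    using that red other boundary_reduct_cong[of c ?A' A] reduced_col_cong[of c ?A' A]
    unfolding reduced_before_def by simp
  moreover have "supported ?A' c" if "c < length es" for c
    using that red new other supported_cong[of ?A' c A] unfolding reduced_before_def by (cases "c = k") auto
  moreover have "?A' r c = boundary_matrix es r c" if "Suc k \<le> c" for c r
    using that red other unfolding reduced_before_def by simp
  ultimately show ?thesis
    unfolding reduced_before_def using new by (auto simp: less_Suc_eq)
qed

lemma reduced_before_red_cols:
  "k \<le> length es \<Longrightarrow> reduced_before (red_cols P M es (boundary_matrix es) k) k"
proof (induction k)
  case 0
  have "supported (boundary_matrix es) c" for c
    using face_morse_le set_enum unfolding supported_def boundary_matrix_def by (metis nth_mem)
  then show ?case
    unfolding reduced_before_def by simp
next
  case (Suc k)
  then show ?case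
    using reduced_before_red_col by simp
qed

lemma conmat_reduce_column:
  assumes "c < length es"
  shows "supported (conmat_reduce P M es) c" "boundary_reduct (conmat_reduce P M es) c"
    "reduced_col (conmat_reduce P M es) c"
  using reduced_before_red_cols[of "length es"] assms
  unfolding conmat_reduce_def reduced_before_def by simp_all

lemma homogeneous_iff_entry_in_morse_set:
  assumes c: "c < length es" and supp: "supported A c"
  shows "homogeneous P M es A c \<longleftrightarrow> (\<exists>r<length es. A r c \<and> same_morse_set (es ! r) (es ! c))"
proof
  assume "homogeneous P M es A c"
  then have nz: "nonzero_col (length es) A c"
    and same: "same_morse_set (es ! c) (es ! low (length es) A c)"
    unfolding homogeneous_iff_same_morse_set by blast+
  then show "\<exists>r<length es. A r c \<and> same_morse_set (es ! r) (es ! c)"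
    using low_less[OF nz] low_entry[OF nz] same_morse_set_sym[OF same] by blast
next
  assume "\<exists>r<length es. A r c \<and> same_morse_set (es ! r) (es ! c)"
  then obtain r where r: "r < length es" "A r c" "same_morse_set (es ! r) (es ! c)"
    by blast
  have nz: "nonzero_col (length es) A c"
    using r unfolding nonzero_col_def by blast
  define l where "l = low (length es) A c"
  have l: "l < length es" "A l c" "r \<le> l"
    using low_less[OF nz] low_entry[OF nz] le_low[of r "length es" A c] r(1,2) unfolding l_def by auto
  have "morse_le (es ! l) (es ! c)"
    using supp l(1,2) unfolding supported_def by blast
  then have "morse_le (es ! l) (es ! r)"
    using same_morse_set_imp_morse_le[OF same_morse_set_sym[OF r(3)]] morse_le_trans by blast
  then have "same_morse_set (es ! l) (es ! r)"
    using index_less_if_morse_le[OF l(1) r(1)] l(3) by (meson not_le)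
  then have "same_morse_set (es ! c) (es ! l)"
    using same_morse_set_sym same_morse_set_trans r(3) by blast
  then show "homogeneous P M es A c"
    using nz unfolding homogeneous_iff_same_morse_set l_def by blast
qed

lemma inj_on_low_homogeneous:
  assumes "\<And>c. c < j \<Longrightarrow> reduced_col A c"
  shows "inj_on (low (length es) A) {s. s < j \<and> homogeneous P M es A s}"
proof -
  have distinct_low: "low (length es) A s \<noteq> low (length es) A t"
    if "s < t" "t < j" "homogeneous P M es A s" "homogeneous P M es A t" for s t
  proof
    assume same_low: "low (length es) A s = low (length es) A t"
    have nz: "nonzero_col (length es) A t"
      using that(4) unfolding homogeneous_def by blast
    have "hom_pivot_before A t (low (length es) A t)"
      using that(1,3) same_low unfolding hom_pivot_before_def by blast
    then show False
      using assms[OF that(2)] low_less[OF nz] low_entry[OF nz] unfolding reduced_col_def by blast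
  qed
  show ?thesis
  proof (rule inj_onI)
    fix s t
    assume s: "s \<in> {s. s < j \<and> homogeneous P M es A s}" and t: "t \<in> {s. s < j \<and> homogeneous P M es A s}"
      and eq: "low (length es) A s = low (length es) A t"
    show "s = t"
    proof (rule ccontr)
      assume "s \<noteq> t"
      then consider "s < t" | "t < s"
        by linarith
      then show False
        using distinct_low[of s t] distinct_low[of t s] s t eq by cases auto
    qed
  qed
qed

text \<open>The two columns differ by a sum of homogeneous columns with pairwise distinct pivots;
  were it nonempty, its largest pivot would be an entry of one of them.\<close>
lemma reduced_reduct_unique:
  assumes "\<And>c. c < j \<Longrightarrow> reduced_col A c"
    and S: "S \<subseteq> {s. s < j \<and> homogeneous P M es A s}" and T: "T \<subseteq> {s. s < j \<and> homogeneous P M es A s}"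
    and x: "\<And>r. r < length es \<Longrightarrow> x r = (b r \<noteq> colsum A S r)"
    and y: "\<And>r. r < length es \<Longrightarrow> y r = (b r \<noteq> colsum A T r)"
    and x_reduced: "\<And>r. r < length es \<Longrightarrow> x r \<Longrightarrow> \<not> hom_pivot_before A j r"
    and y_reduced: "\<And>r. r < length es \<Longrightarrow> y r \<Longrightarrow> \<not> hom_pivot_before A j r"
    and r: "r < length es"
  shows "x r = y r"
proof -
  let ?D = "sym_diff S T"
  have fin: "finite S" "finite T"
    using finite_subset[OF S] finite_subset[OF T] by simp_all
  have D: "?D \<subseteq> {s. s < j \<and> homogeneous P M es A s}"
    using S T by blast
  have diff: "(x r \<noteq> y r) = colsum A ?D r" if "r < length es" for r
    using x[OF that] y[OF that] colsum_symdiff[OF fin, of A r] by auto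
  have "?D = {}"
  proof (rule ccontr)
    assume "?D \<noteq> {}"
    moreover have "finite ?D"
      using fin by simp
    moreover have "nonzero_col (length es) A t" if "t \<in> ?D" for t
      using D that unfolding homogeneous_def by blast
    moreover have "inj_on (low (length es) A) ?D"
      using inj_on_low_homogeneous[OF assms(1)] D by (rule inj_on_subset)
    ultimately obtain t where t: "t \<in> ?D" "colsum A ?D (low (length es) A t)"
      by (metis colsum_at_max_pivot)
    let ?l = "low (length es) A t"
    have t_hom: "t < j" "homogeneous P M es A t"
      using D t(1) by auto
    then have "?l < length es"
      using low_less unfolding homogeneous_def by blast
    moreover have "hom_pivot_before A j ?l"
      using t_hom unfolding hom_pivot_before_def by blast
    ultimately show False
      using diff[of ?l] t(2) x_reduced[of ?l] y_reduced[of ?l] by blast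
  qed
  then have "\<not> colsum A ?D r"
    by (simp only: colsum_empty not_False_eq_True)
  then show ?thesis
    using diff[OF r] by blast
qed

end

section \<open>Comparing two enumerations\<close>

locale morse_fixed_pair =
  morse_decomposed K V P le M +
  E: admissible_enumeration K V P le M es + E': admissible_enumeration K V P le M es'
  for K :: "'v set set" and V P le M and es es' :: "'v set list" +
  assumes morse_fixed: "morse_fixed P M es es'"
begin

lemma length_eq: "length es' = length es"
  using distinct_card[OF E.distinct_enum] distinct_card[OF E'.distinct_enum] E.set_enum E'.set_enum
  by simp

lemma bij_betw_nth_enums:
  "bij_betw ((!) es) {..<length es} K" "bij_betw ((!) es') {..<length es} K"
  using bij_betw_nth[OF E.distinct_enum refl] bij_betw_nth[OF E'.distinct_enum refl]
    E.set_enum E'.set_enum length_eq by simp_all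

definition reindex :: "nat \<Rightarrow> nat" where
  "reindex r = the_inv_into {..<length es} ((!) es') (es ! r)"

lemma bij_betw_reindex: "bij_betw reindex {..<length es} {..<length es}"
proof -
  have "reindex = the_inv_into {..<length es} ((!) es') \<circ> (!) es"
    by (simp add: fun_eq_iff reindex_def)
  then show ?thesis
    using bij_betw_trans[OF bij_betw_nth_enums(1) bij_betw_the_inv_into[OF bij_betw_nth_enums(2)]]
    by simp
qed

lemma reindex_less: "r < length es \<Longrightarrow> reindex r < length es"
  using bij_betwE[OF bij_betw_reindex] by simp

lemma reindex_surj:
  assumes "r' < length es"
  obtains r where "r < length es" "reindex r = r'"
proof -
  have "r' \<in> reindex ` {..<length es}"
    using bij_betw_imp_surj_on[OF bij_betw_reindex] assms by simp
  then show ?thesis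
    using that by auto
qed

lemma image_reindex_preimage:
  assumes "S' \<subseteq> {..<length es}"
  shows "reindex ` {s. s < length es \<and> reindex s \<in> S'} = S'"
proof (intro equalityI subsetI)
  fix s' assume s': "s' \<in> S'"
  then obtain s where "s < length es" "reindex s = s'"
    using assms reindex_surj by blast
  then show "s' \<in> reindex ` {s. s < length es \<and> reindex s \<in> S'}"
    using s' by auto
qed auto

lemma nth_reindex: "r < length es \<Longrightarrow> es' ! reindex r = es ! r"
  using f_the_inv_into_f_bij_betw[OF bij_betw_nth_enums(2), of "es ! r"] nth_mem[of r es] E.set_enum
  unfolding reindex_def by simp

lemma reindex_eqI: "r < length es \<Longrightarrow> r' < length es \<Longrightarrow> es' ! r' = es ! r \<Longrightarrow> reindex r = r'"
  using nth_eq_iff_index_eq[OF E'.distinct_enum, of "reindex r" r'] nth_reindex reindex_less length_eq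
  by simp

lemma reindex_less_iff:
  assumes ab: "a < length es" "b < length es" and below: "morse_le (es ! a) (es ! b)"
  shows "reindex a < reindex b \<longleftrightarrow> a < b"
proof (cases "same_morse_set (es ! a) (es ! b)")
  case True
  then obtain p where "p \<in> P" "es ! a \<in> M p" "es ! b \<in> M p"
    unfolding same_morse_set_def by blast
  then show ?thesis
    using morse_fixed[unfolded morse_fixed_def, rule_format, of p a b "reindex a" "reindex b"]
      ab reindex_less nth_reindex length_eq by simp
next
  case False
  have "a < b"
    using E.index_less_if_morse_le[OF ab below False] .
  moreover have "reindex a < reindex b"
    using E'.index_less_if_morse_le[of "reindex a" "reindex b"] ab below False
      reindex_less nth_reindex length_eq by simp
  ultimately show ?thesis
    by simp
qed

lemma boundary_matrix_reindex:
  "r < length es \<Longrightarrow> c < length es \<Longrightarrow>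
     boundary_matrix es' (reindex r) (reindex c) = boundary_matrix es r c"
  by (simp add: boundary_matrix_def nth_reindex reindex_less length_eq)

lemma homogeneous_reindex:
  assumes c: "c < length es" and supp: "E.supported A c" "E'.supported A' (reindex c)"
    and col: "\<And>r. r < length es \<Longrightarrow> A' (reindex r) (reindex c) = A r c"
  shows "homogeneous P M es' A' (reindex c) \<longleftrightarrow> homogeneous P M es A c"
proof -
  have "homogeneous P M es' A' (reindex c) \<longleftrightarrow>
      (\<exists>r'<length es. A' r' (reindex c) \<and> same_morse_set (es' ! r') (es' ! reindex c))"
    using E'.homogeneous_iff_entry_in_morse_set supp(2) reindex_less c length_eq by simp
  also have "\<dots> \<longleftrightarrow> (\<exists>r<length es. A r c \<and> same_morse_set (es ! r) (es ! c))"
  proof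
    assume "\<exists>r'<length es. A' r' (reindex c) \<and> same_morse_set (es' ! r') (es' ! reindex c)"
    then obtain r' where r': "r' < length es" "A' r' (reindex c)"
      "same_morse_set (es' ! r') (es' ! reindex c)"
      by blast
    obtain r where "r < length es" "reindex r = r'"
      by (rule reindex_surj[OF r'(1)])
    then show "\<exists>r<length es. A r c \<and> same_morse_set (es ! r) (es ! c)"
      using r' col c nth_reindex by auto
  next
    assume "\<exists>r<length es. A r c \<and> same_morse_set (es ! r) (es ! c)"
    then obtain r where "r < length es" "A r c" "same_morse_set (es ! r) (es ! c)"
      by blast
    then show "\<exists>r'<length es. A' r' (reindex c) \<and> same_morse_set (es' ! r') (es' ! reindex c)"
      using col c nth_reindex reindex_less by (intro exI[of _ "reindex r"]) auto
  qed
  also have "\<dots> \<longleftrightarrow> homogeneous P M es A c"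
    using E.homogeneous_iff_entry_in_morse_set[OF c supp(1)] by simp
  finally show ?thesis .
qed

text \<open>The pivot of a homogeneous column is its last entry in the Morse set of the column,
  and the order inside a Morse set does not depend on the enumeration.\<close>
lemma low_reindex:
  assumes c: "c < length es" and supp: "E.supported A c" and hom: "homogeneous P M es A c"
    and col: "\<And>r. r < length es \<Longrightarrow> A' (reindex r) (reindex c) = A r c"
  shows "low (length es') A' (reindex c) = reindex (low (length es) A c)"
proof -
  define l where "l = low (length es) A c"
  have nz: "nonzero_col (length es) A c"
    using hom unfolding homogeneous_def by blast
  have l: "l < length es" "A l c" "same_morse_set (es ! c) (es ! l)"
    using low_less[OF nz] low_entry[OF nz] hom
    unfolding l_def E.homogeneous_iff_same_morse_set by auto
  show ?thesis
    unfolding l_def[symmetric] length_eq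
  proof (rule low_eqI)
    show "reindex l < length es" "A' (reindex l) (reindex c)"
      using l reindex_less col by auto
    fix r' assume r': "r' < length es" "A' r' (reindex c)"
    obtain r where r: "r < length es" "reindex r = r'"
      by (rule reindex_surj[OF r'(1)])
    then have "A r c"
      using col r' by auto
    then have "r \<le> l"
      using le_low[of r "length es" A c] r(1) unfolding l_def by blast
    moreover have "morse_le (es ! r) (es ! l)"
      using supp r(1) \<open>A r c\<close> l(3) same_morse_set_imp_morse_le morse_le_trans
      unfolding E.supported_def by blast
    ultimately show "r' \<le> reindex l"
      using reindex_less_iff[OF r(1) l(1)] r(2) by (cases "r = l") auto
  qed
qed

lemma reindexed_column_reduced:
  assumes j: "j < length es"
    and left: "\<And>s r. s < j \<Longrightarrow> r < length es \<Longrightarrow>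
      conmat_reduce P M es' (reindex r) (reindex s) = conmat_reduce P M es r s"
    and r: "r < length es" and entry: "conmat_reduce P M es' (reindex r) (reindex j)"
  shows "\<not> E.hom_pivot_before (conmat_reduce P M es) j r"
proof
  let ?R = "conmat_reduce P M es" and ?R' = "conmat_reduce P M es'"
  assume "E.hom_pivot_before ?R j r"
  then obtain s where s: "s < j" "homogeneous P M es ?R s" "low (length es) ?R s = r"
    unfolding E.hom_pivot_before_def by blast
  have s_less: "s < length es"
    using s(1) j by simp
  have col: "\<And>r. r < length es \<Longrightarrow> ?R' (reindex r) (reindex s) = ?R r s"
    using left s(1) by blast
  have supp: "E.supported ?R s" "E'.supported ?R' (reindex s)"
    using E.conmat_reduce_column(1) E'.conmat_reduce_column(1) s_less reindex_less length_eq by auto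
  have "homogeneous P M es' ?R' (reindex s)"
    using homogeneous_reindex[where A' = ?R', OF s_less supp col] s(2) by simp
  moreover have "low (length es') ?R' (reindex s) = reindex r"
    using low_reindex[where A' = ?R', OF s_less supp(1) s(2) col] s(3) by simp
  moreover have "reindex s < reindex j"
  proof -
    have "morse_le (es' ! reindex r) (es' ! reindex j)"
      using E'.conmat_reduce_column(1)[of "reindex j"] entry r j reindex_less length_eq
      unfolding E'.supported_def by simp
    then have "morse_le (es ! r) (es ! j)"
      using nth_reindex r j by simp
    moreover have "same_morse_set (es ! s) (es ! r)"
      using s(2,3) unfolding E.homogeneous_iff_same_morse_set by blast
    ultimately have "morse_le (es ! s) (es ! j)"
      using same_morse_set_imp_morse_le morse_le_trans by blast
    then show ?thesis
      using reindex_less_iff[OF s_less j] s(1) by simp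
  qed
  ultimately have "E'.hom_pivot_before ?R' (reindex j) (reindex r)"
    unfolding E'.hom_pivot_before_def by blast
  then show False
    using E'.conmat_reduce_column(3)[of "reindex j"] entry r j reindex_less length_eq
    unfolding E'.reduced_col_def by auto
qed

lemma reindexed_column_reduct:
  assumes j: "j < length es"
    and left: "\<And>s r. s < j \<Longrightarrow> r < length es \<Longrightarrow>
      conmat_reduce P M es' (reindex r) (reindex s) = conmat_reduce P M es r s"
  obtains S where "S \<subseteq> {s. s < j \<and> homogeneous P M es (conmat_reduce P M es) s}"
    and "\<And>r. r < length es \<Longrightarrow> conmat_reduce P M es' (reindex r) (reindex j) =
      (boundary_matrix es r j \<noteq> colsum (conmat_reduce P M es) S r)"
proof -
  let ?R = "conmat_reduce P M es" and ?R' = "conmat_reduce P M es'"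
  obtain S' where S': "S' \<subseteq> {s'. s' < reindex j \<and> homogeneous P M es' ?R' s' \<and>
        morse_le (es' ! s') (es' ! reindex j)}"
    and sum': "\<forall>r'<length es. ?R' r' (reindex j) =
        (boundary_matrix es' r' (reindex j) \<noteq> colsum ?R' S' r')"
    using E'.conmat_reduce_column(2)[of "reindex j"] j reindex_less length_eq
    unfolding E'.boundary_reduct_def by auto
  define S where "S = {s. s < length es \<and> reindex s \<in> S'}"
  have S: "S \<subseteq> {s. s < j \<and> homogeneous P M es ?R s}"
  proof
    fix s assume "s \<in> S"
    then have s: "s < length es" "reindex s < reindex j" "homogeneous P M es' ?R' (reindex s)"
        "morse_le (es ! s) (es ! j)"
      using S' nth_reindex j unfolding S_def by auto
    then have "s < j"
      using reindex_less_iff[OF s(1) j] by simp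
    moreover have "E.supported ?R s" "E'.supported ?R' (reindex s)"
      using E.conmat_reduce_column(1) E'.conmat_reduce_column(1) s(1) reindex_less length_eq by auto
    ultimately show "s \<in> {s. s < j \<and> homogeneous P M es ?R s}"
      using homogeneous_reindex[where A' = ?R', OF s(1)] left s(3) by auto
  qed
  have "reindex ` S = S'"
    unfolding S_def using S' reindex_less[OF j] by (intro image_reindex_preimage) auto
  moreover have "inj_on reindex S"
  proof (rule inj_on_subset)
    show "inj_on reindex {..<length es}"
      using bij_betw_reindex by (simp add: bij_betw_def)
  qed (auto simp: S_def)
  ultimately have "colsum ?R' S' (reindex r) = colsum ?R S r" if "r < length es" for r
    using colsum_image[of reindex S ?R' "reindex r" ?R r] left[OF _ that] S by auto
  then show ?thesis
    using that S sum' boundary_matrix_reindex j reindex_less by simp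
qed

lemma conmat_reduce_reindex:
  assumes "r < length es" "c < length es"
  shows "conmat_reduce P M es' (reindex r) (reindex c) = conmat_reduce P M es r c"
proof -
  let ?R = "conmat_reduce P M es" and ?R' = "conmat_reduce P M es'"
  have "\<forall>r<length es. ?R' (reindex r) (reindex c) = ?R r c"
    using assms(2)
  proof (induction c rule: less_induct)
    case (less j)
    have left: "\<And>s r. s < j \<Longrightarrow> r < length es \<Longrightarrow> ?R' (reindex r) (reindex s) = ?R r s"
      using less by simp
    obtain S where S: "S \<subseteq> {s. s < j \<and> homogeneous P M es ?R s}"
      and sum: "\<forall>r<length es. ?R r j = (boundary_matrix es r j \<noteq> colsum ?R S r)"
      using E.conmat_reduce_column(2)[OF less.prems] unfolding E.boundary_reduct_def by blast
    obtain T where T: "T \<subseteq> {s. s < j \<and> homogeneous P M es ?R s}"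
      and sum': "\<And>r. r < length es \<Longrightarrow> ?R' (reindex r) (reindex j) =
        (boundary_matrix es r j \<noteq> colsum ?R T r)"
      using reindexed_column_reduct[OF less.prems left] by blast
    have reduced: "\<And>c. c < j \<Longrightarrow> E.reduced_col ?R c"
      using E.conmat_reduce_column(3) less.prems by simp
    have reduced_j: "\<And>r. r < length es \<Longrightarrow> ?R r j \<Longrightarrow> \<not> E.hom_pivot_before ?R j r"
      using E.conmat_reduce_column(3)[OF less.prems] unfolding E.reduced_col_def by blast
    show ?case
    proof (intro allI impI)
      fix r assume r: "r < length es"
      show "?R' (reindex r) (reindex j) = ?R r j"
        using E.reduced_reduct_unique[where x = "\<lambda>r. ?R r j" and y = "\<lambda>r. ?R' (reindex r) (reindex j)",
            OF reduced S T sum[rule_format] sum' reduced_j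
            reindexed_column_reduced[OF less.prems left] r]
        by simp
    qed
  qed
  then show ?thesis
    using assms(1) by blast
qed

lemma homogeneous_conmat_reduce_reindex:
  assumes j: "j < length es" and hom: "homogeneous P M es (conmat_reduce P M es) j"
  shows "homogeneous P M es' (conmat_reduce P M es') (reindex j)"
    and "low (length es') (conmat_reduce P M es') (reindex j) =
      reindex (low (length es) (conmat_reduce P M es) j)"
proof -
  let ?R = "conmat_reduce P M es" and ?R' = "conmat_reduce P M es'"
  have supp: "E.supported ?R j" "E'.supported ?R' (reindex j)"
    using E.conmat_reduce_column(1) E'.conmat_reduce_column(1) j reindex_less length_eq by auto
  have col: "\<And>r. r < length es \<Longrightarrow> ?R' (reindex r) (reindex j) = ?R r j"
    using conmat_reduce_reindex j by blast
  show "homogeneous P M es' ?R' (reindex j)"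
    using homogeneous_reindex[where A' = ?R', OF j supp col] hom by simp
  show "low (length es') ?R' (reindex j) = reindex (low (length es) ?R j)"
    using low_reindex[where A' = ?R', OF j supp(1) hom col] .
qed

end

theorem proposition6:
  fixes K :: "'v set set" and V :: "'v set set set"
    and P :: "'p set" and le :: "'p \<Rightarrow> 'p \<Rightarrow> bool" and M :: "'p \<Rightarrow> 'v set set"
    and es es' :: "'v set list"
  assumes "simplicial_complex K"
    and "multivector_field K V"
    and "morse_decomposition K V P le M"
    and "admissible_enum K P le M es"
    and "admissible_enum K P le M es'"
    and "morse_fixed P M es es'"
  shows "(\<forall>i<length es. \<forall>j<length es. \<forall>i'<length es'. \<forall>j'<length es'.
            es ! i = es' ! i' \<and> es ! j = es' ! j' \<longrightarrow>
            conmat_reduce P M es i j = conmat_reduce P M es' i' j')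
       \<and> (\<forall>j<length es. \<forall>l<length es. \<forall>j'<length es'. \<forall>l'<length es'.
            homogeneous P M es (conmat_reduce P M es) j \<and>
            low (length es) (conmat_reduce P M es) j = l \<and>
            es' ! j' = es ! j \<and> es' ! l' = es ! l \<longrightarrow>
            homogeneous P M es' (conmat_reduce P M es') j' \<and>
            low (length es') (conmat_reduce P M es') j' = l')"
proof -
  interpret morse_fixed_pair K V P le M es es'
    by unfold_locales (fact assms)+
  have "conmat_reduce P M es i j = conmat_reduce P M es' i' j'"
    if "i < length es" "j < length es" "i' < length es'" "j' < length es'"
      "es ! i = es' ! i'" "es ! j = es' ! j'" for i j i' j'
  proof -
    have "reindex i = i'" "reindex j = j'"
      using that reindex_eqI length_eq by simp_all
    then show ?thesis
      using conmat_reduce_reindex[OF that(1,2)] by simp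
  qed
  moreover have "homogeneous P M es' (conmat_reduce P M es') j' \<and>
      low (length es') (conmat_reduce P M es') j' = l'"
    if "j < length es" "l < length es" "j' < length es'" "l' < length es'"
      "homogeneous P M es (conmat_reduce P M es) j" "low (length es) (conmat_reduce P M es) j = l"
      "es' ! j' = es ! j" "es' ! l' = es ! l" for j l j' l'
  proof -
    have "reindex j = j'" "reindex l = l'"
      using that reindex_eqI length_eq by simp_all
    then show ?thesis
      using homogeneous_conmat_reduce_reindex[OF that(1,5)] that(6) by simp
  qed
  ultimately show ?thesis
    by blast
qed

end
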